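(* Let $k\ge 0$ and $l\ge 1$ be integers such that the $k$th and $(k+l)$th Hopf bifurcations are nondegenerate. Then $\mu_k(lT^k_0+1)=\mu_{k+l}$ and $\frac{T^k_0}{lT^k_0+1}=T^{k+l}_0$. Moreover, near the bifurcation points the Cooke transform $C_l$ maps the $k$th Hopf branch into the $(k+l)$th Hopf branch. That is, for all sufficiently small $\eta>0$ there exists $\eta'\in(0,\eta_{k+l})$ such that $$C_l\big(\mu_k+\delta_k\eta,\;T^k_\eta,\;p^k_\eta\big)=\big(\mu_{k+l}+\delta_{k+l}\eta',\;T^{k+l}_{\eta'},\;p^{k+l}_{\eta'}\big),$$ where the periodic solutions are identified up to a time translation.
   Context: Consider the scalar delay differential equation (1) $x'(t)=-\mu f(x(t-1))$, with real parameter $\mu$ and phase space $C([-1,0],\mathbb R)$. Here $f:\mathbb R\to\mathbb R$ is $C^3$ with $f(0)=0$ and $f'(0)=1$, so that $f(\xi)=\xi+B\xi^2+C\xi^3+o(\xi^3)$ with $B=f''(0)/2$ and $C=f'''(0)/6$. For $k\in\mathbb Z$ let $\mu_k=\frac{(4k+1)\pi}{2}$ and $H(k)=\frac{22(4k+1)\pi-8}{15(4k+1)\pi}$. The $k$th Hopf bifurcation (at $\mu_k$) is supercritical if $C<H(k)B^2$ and subcritical if $C>H(k)B^2$; it is called nondegenerate if $C\ne H(k)B^2$. Supercritical means the bifurcating small periodic orbits are stable within the center manifold; subcritical means they are unstable there. Hopf branch notation, for $k\ge0$ with a nondegenerate $k$th bifurcation: put $\delta_k=1$ if it is supercritical and $\delta_k=-1$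 if it is subcritical. There are $\eta_k>0$ and a family of nonconstant periodic solutions $p^k_\eta$, $\eta\in(0,\eta_k)$, of (1) with parameter $\mu=\mu_k+\delta_k\eta$. These bifurcate from $0$ at $\mu_k$ (amplitude $\to0$ as $\eta\to0$), and they are locally unique up to time translation. $T^k_\eta$ denotes the minimal period of $p^k_\eta$, and $T^k_\eta\to T^k_0:=\frac{4}{4k+1}$ as $\eta\to0$. Cooke transform: for $l\in\mathbb N$, $C_l(\mu_*,T,p)=\big(\mu_*(lT+1),\,\frac{T}{lT+1},\,t\mapsto p((lT+1)t)\big)$, where $p$ is a periodic solution of (1) with parameter $\mu_*>0$ and period $T$. *)

theory Defs
  imports "HOL-Analysis.Analysis"
begin

definition C3 :: "(real \<Rightarrow> real) \<Rightarrow> bool" where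
  "C3 f \<longleftrightarrow> (\<forall>n<3. (\<forall>x. (deriv ^^ n) f differentiable (at x))) \<and> continuous_on UNIV ((deriv ^^ 3) f)"

definition coefB :: "(real \<Rightarrow> real) \<Rightarrow> real" where
  "coefB f = (deriv ^^ 2) f 0 / 2"

definition coefC :: "(real \<Rightarrow> real) \<Rightarrow> real" where
  "coefC f = (deriv ^^ 3) f 0 / 6"

definition mu :: "int \<Rightarrow> real" where
  "mu k = (4 * of_int k + 1) * pi / 2"

definition Hcrit :: "int \<Rightarrow> real" where
  "Hcrit k = (22 * (4 * of_int k + 1) * pi - 8) / (15 * (4 * of_int k + 1) * pi)"

definition nondegenerate :: "(real \<Rightarrow> real) \<Rightarrow> int \<Rightarrow> bool" where
  "nondegenerate f k \<longleftrightarrow> coefC f \<noteq> Hcrit k * (coefB f)^2"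

text \<open>delta_k = 1 if supercritical (C < H(k) B^2), -1 if subcritical.\<close>
definition hopf_delta :: "(real \<Rightarrow> real) \<Rightarrow> int \<Rightarrow> real" where
  "hopf_delta f k = (if coefC f < Hcrit k * (coefB f)^2 then 1 else -1)"

definition T0 :: "int \<Rightarrow> real" where
  "T0 k = 4 / (4 * of_int k + 1)"

definition is_solution :: "(real \<Rightarrow> real) \<Rightarrow> real \<Rightarrow> (real \<Rightarrow> real) \<Rightarrow> bool" where
  "is_solution f m x \<longleftrightarrow> (\<forall>t. (x has_real_derivative (- m * f (x (t - 1)))) (at t))"

text \<open>T is the minimal period of x (this excludes constant functions).\<close>
definition min_period :: "(real \<Rightarrow> real) \<Rightarrow> real \<Rightarrow> bool" where
  "min_period x T \<longleftrightarrow> T > 0 \<and> (\<forall>t. x (t + T) = x t) \<and>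
     (\<forall>S. 0 < S \<and> S < T \<longrightarrow> \<not> (\<forall>t. x (t + S) = x t))"

definition hopf_branch :: "(real \<Rightarrow> real) \<Rightarrow> int \<Rightarrow> real \<Rightarrow> real \<Rightarrow>
    (real \<Rightarrow> real \<Rightarrow> real) \<Rightarrow> (real \<Rightarrow> real) \<Rightarrow> bool" where
  "hopf_branch f k \<delta> \<eta>k p T \<longleftrightarrow>
     \<eta>k > 0 \<and>
     (\<forall>\<eta>. 0 < \<eta> \<and> \<eta> < \<eta>k \<longrightarrow>
        is_solution f (mu k + \<delta> * \<eta>) (p \<eta>) \<and> (\<exists>t s. p \<eta> t \<noteq> p \<eta> s) \<and> min_period (p \<eta>) (T \<eta>)) \<and>
     (\<forall>e>0. eventually (\<lambda>\<eta>. \<forall>t. \<bar>p \<eta> t\<bar> < e) (at_right 0)) \<and>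
     (T \<longlongrightarrow> T0 k) (at_right 0) \<and>
     (\<exists>e>0. \<forall>m x S. is_solution f m x \<and> min_period x S \<and> \<bar>m - mu k\<bar> < e \<and>
         (\<forall>t. \<bar>x t\<bar> < e) \<and> \<bar>S - T0 k\<bar> < e \<longrightarrow>
         (\<exists>\<eta>. 0 < \<eta> \<and> \<eta> < \<eta>k \<and> m = mu k + \<delta> * \<eta> \<and> (\<exists>s. \<forall>t. x t = p \<eta> (t + s))))"

end

theory Submission
  imports Defs
begin

text \<open>If \<open>p\<close> solves \<open>x'(t) = -\<mu> f(x(t-1))\<close> with period \<open>T\<close>, then \<open>p((lT+1)t)\<close> solves the
  equation with parameter \<open>\<mu>(lT+1)\<close>, because the delay \<open>1\<close> of the rescaled function
  corresponds to the delay \<open>lT+1\<close> of \<open>p\<close>, which periodicity reduces to \<open>1\<close>. The Cooke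
  transform therefore maps the \<open>k\<close>th Hopf data \<open>(\<mu>\<^sub>k, T\<^sub>0\<^sup>k)\<close> exactly onto the
  \<open>(k+l)\<close>th and, by continuity, the small orbits of the \<open>k\<close>th branch into the neighbourhood
  where the \<open>(k+l)\<close>th branch is locally unique. The nondegeneracy and smoothness
  hypotheses only guarantee that the branches exist; here the branches are given.\<close>

lemma periodic_add_multiple:
  assumes "\<forall>t. x (t + T) = x t"
  shows "x (t + real n * T) = x t"
proof (induction n arbitrary: t)
  case 0
  then show ?case by simp
next
  case (Suc n)
  have "x (t + real (Suc n) * T) = x ((t + real n * T) + T)" by (simp add: algebra_simps)
  also have "\<dots> = x (t + real n * T)" using assms by blast
  finally show ?case using Suc by simp
qed

lemma min_period_unique:
  assumes "min_period x A" "min_period x B"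
  shows "A = B"
  using assms unfolding min_period_def by (meson linorder_neqE_linordered_idom)

lemma min_period_time_shift:
  assumes "\<forall>t. x t = q (t + s)" "min_period q S"
  shows "min_period x S"
proof -
  have "(\<forall>t. x (t + P) = x t) \<longleftrightarrow> (\<forall>t. q (t + P) = q t)" for P
  proof
    assume shift: "\<forall>t. x (t + P) = x t"
    show "\<forall>t. q (t + P) = q t"
    proof
      fix t
      have "x ((t - s) + P) = x (t - s)" using shift by blast
      then show "q (t + P) = q t" using assms(1) by (simp add: algebra_simps)
    qed
  next
    assume "\<forall>t. q (t + P) = q t"
    then show "\<forall>t. x (t + P) = x t"
      using assms(1) by (metis add.commute add.left_commute)
  qed
  then show ?thesis using assms(2) unfolding min_period_def by blast
qed

lemma min_period_time_scale:
  assumes "min_period x T" "c > 0"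
  shows "min_period (\<lambda>t. x (c * t)) (T / c)"
proof -
  have period_iff: "(\<forall>t. x (c * (t + P)) = x (c * t)) \<longleftrightarrow> (\<forall>t. x (t + c * P) = x t)" for P
  proof
    assume scaled: "\<forall>t. x (c * (t + P)) = x (c * t)"
    show "\<forall>t. x (t + c * P) = x t"
    proof
      fix t
      have "x (c * (t / c + P)) = x (c * (t / c))" using scaled by blast
      then show "x (t + c * P) = x t" using assms(2) by (simp add: algebra_simps)
    qed
  qed (simp add: algebra_simps)
  show ?thesis unfolding min_period_def
  proof (intro conjI allI impI)
    show "T / c > 0" using assms unfolding min_period_def by simp
    show "x (c * (t + T / c)) = x (c * t)" for t
      using period_iff[of "T / c"] assms unfolding min_period_def by simp
    fix Q
    assume "0 < Q \<and> Q < T / c"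
    then have "0 < c * Q" "c * Q < T" using assms(2) by (auto simp: field_simps)
    then show "\<not> (\<forall>t. x (c * (t + Q)) = x (c * t))"
      using period_iff[of Q] assms(1) unfolding min_period_def by blast
  qed
qed

lemma is_solution_cooke:
  assumes "is_solution f m x" "\<forall>t. x (t + T) = x t"
  shows "is_solution f (m * (real l * T + 1)) (\<lambda>t. x ((real l * T + 1) * t))"
  unfolding is_solution_def
proof
  fix t
  define c where "c = real l * T + 1"
  have "(x has_real_derivative (- m * f (x (c * t - 1)))) (at (c * t))"
    using assms(1) unfolding is_solution_def by blast
  moreover have "((\<lambda>t. c * t) has_real_derivative c) (at t)"
    using DERIV_cmult_Id[of c t] by simp
  ultimately have "((\<lambda>t. x (c * t)) has_real_derivative (- m * f (x (c * t - 1))) * c) (at t)"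
    by (rule DERIV_chain2)
  moreover have "x (c * t - 1) = x (c * (t - 1))"
    using periodic_add_multiple[OF assms(2), of "c * (t - 1)" l]
    by (simp add: c_def algebra_simps)
  ultimately show "((\<lambda>t. x (c * t)) has_real_derivative
      - (m * c) * f (x (c * (t - 1)))) (at t)" by (simp add: algebra_simps)
qed

lemma cooke_periodic_solution:
  assumes "is_solution f m x" "min_period x T"
  shows "is_solution f (m * (real l * T + 1)) (\<lambda>t. x ((real l * T + 1) * t))"
    and "min_period (\<lambda>t. x ((real l * T + 1) * t)) (T / (real l * T + 1))"
proof -
  have "\<forall>t. x (t + T) = x t" "real l * T + 1 > 0"
    using assms(2) unfolding min_period_def by (auto intro: add_nonneg_pos)
  then show "is_solution f (m * (real l * T + 1)) (\<lambda>t. x ((real l * T + 1) * t))"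
    and "min_period (\<lambda>t. x ((real l * T + 1) * t)) (T / (real l * T + 1))"
    using is_solution_cooke[OF assms(1)] min_period_time_scale[OF assms(2)] by auto
qed

lemma T0_pos: "k \<ge> 0 \<Longrightarrow> T0 k > 0"
  unfolding T0_def by simp

lemma mu_cooke: "k \<ge> 0 \<Longrightarrow> mu k * (real l * T0 k + 1) = mu (k + int l)"
  unfolding mu_def T0_def by (simp add: field_simps)

lemma T0_cooke:
  assumes "k \<ge> 0"
  shows "T0 k / (real l * T0 k + 1) = T0 (k + int l)"
proof -
  define a where "a = 4 * real_of_int k + 1"
  have "a > 0" using assms unfolding a_def by simp
  then have "T0 k / (real l * T0 k + 1) = 4 / (a + 4 * real l)"
    unfolding T0_def a_def[symmetric] by (simp add: field_simps)
  then show ?thesis unfolding T0_def a_def by (simp add: algebra_simps)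
qed

lemma hopf_branch_locally_unique:
  assumes "hopf_branch f k \<delta> \<eta>k p T"
  obtains e where "e > 0"
    and "\<And>m x S'. is_solution f m x \<Longrightarrow> min_period x S' \<Longrightarrow> \<bar>m - mu k\<bar> < e \<Longrightarrow>
      (\<forall>t. \<bar>x t\<bar> < e) \<Longrightarrow> \<bar>S' - T0 k\<bar> < e \<Longrightarrow>
      \<exists>\<eta>. 0 < \<eta> \<and> \<eta> < \<eta>k \<and> m = mu k + \<delta> * \<eta> \<and> S' = T \<eta> \<and> (\<exists>s. \<forall>t. x t = p \<eta> (t + s))"
proof -
  from assms obtain e where "e > 0"
    and unique: "\<And>m x S'. is_solution f m x \<Longrightarrow> min_period x S' \<Longrightarrow> \<bar>m - mu k\<bar> < e \<Longrightarrow>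
      (\<forall>t. \<bar>x t\<bar> < e) \<Longrightarrow> \<bar>S' - T0 k\<bar> < e \<Longrightarrow>
      \<exists>\<eta>. 0 < \<eta> \<and> \<eta> < \<eta>k \<and> m = mu k + \<delta> * \<eta> \<and> (\<exists>s. \<forall>t. x t = p \<eta> (t + s))"
    unfolding hopf_branch_def by blast
  moreover have "S' = T \<eta>"
    if "min_period x S'" "0 < \<eta>" "\<eta> < \<eta>k" "\<forall>t. x t = p \<eta> (t + s)" for x S' \<eta> s
    using that assms min_period_unique min_period_time_shift unfolding hopf_branch_def by metis
  ultimately show ?thesis using that by metis
qed

lemma cooke_hopf_branch_eventually_near:
  assumes "hopf_branch f k \<delta> \<eta>k p T" "k \<ge> 0" "e > 0"
  shows "\<forall>\<^sub>F \<eta> in at_right 0. \<eta> < \<eta>k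
    \<and> \<bar>(mu k + \<delta> * \<eta>) * (real l * T \<eta> + 1) - mu (k + int l)\<bar> < e
    \<and> \<bar>T \<eta> / (real l * T \<eta> + 1) - T0 (k + int l)\<bar> < e
    \<and> (\<forall>t. \<bar>p \<eta> t\<bar> < e)"
proof -
  have "\<eta>k > 0" and small: "\<forall>\<^sub>F \<eta> in at_right 0. \<forall>t. \<bar>p \<eta> t\<bar> < e"
    and T_lim: "(T \<longlongrightarrow> T0 k) (at_right 0)"
    using assms(1,3) unfolding hopf_branch_def by blast+
  have "((\<lambda>\<eta>. (mu k + \<delta> * \<eta>) * (real l * T \<eta> + 1)) \<longlongrightarrow> mu (k + int l)) (at_right 0)"
  proof -
    have "((\<lambda>\<eta>. (mu k + \<delta> * \<eta>) * (real l * T \<eta> + 1)) \<longlongrightarrow> (mu k + \<delta> * 0) * (real l * T0 k + 1))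
        (at_right 0)"
      by (intro tendsto_intros T_lim)
    then show ?thesis using mu_cooke[OF assms(2)] by simp
  qed
  moreover have "((\<lambda>\<eta>. T \<eta> / (real l * T \<eta> + 1)) \<longlongrightarrow> T0 (k + int l)) (at_right 0)"
  proof -
    have "real l * T0 k \<ge> 0" using T0_pos[OF assms(2)] by simp
    then have "real l * T0 k + 1 \<noteq> 0" by linarith
    then have "((\<lambda>\<eta>. T \<eta> / (real l * T \<eta> + 1)) \<longlongrightarrow> T0 k / (real l * T0 k + 1)) (at_right 0)"
      by (intro tendsto_intros T_lim)
    then show ?thesis using T0_cooke[OF assms(2)] by simp
  qed
  moreover have "\<forall>\<^sub>F \<eta> in at_right 0. \<eta> < \<eta>k"
    using eventually_at_right_real[OF \<open>\<eta>k > 0\<close>] by (rule eventually_mono) simp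
  ultimately show ?thesis
    using small assms(3) by (auto simp: dist_real_def dest!: tendstoD intro!: eventually_conj)
qed

theorem proposition1:
  fixes f :: "real \<Rightarrow> real" and k :: int and l :: nat
    and \<eta>1 \<eta>2 :: real and p q :: "real \<Rightarrow> real \<Rightarrow> real" and T S :: "real \<Rightarrow> real"
  assumes "C3 f" and "f 0 = 0" and "deriv f 0 = 1"
    and "k \<ge> 0" and "l \<ge> 1"
    and "nondegenerate f k" and "nondegenerate f (k + int l)"
    and "hopf_branch f k (hopf_delta f k) \<eta>1 p T"
    and "hopf_branch f (k + int l) (hopf_delta f (k + int l)) \<eta>2 q S"
  shows "mu k * (real l * T0 k + 1) = mu (k + int l)
    \<and> T0 k / (real l * T0 k + 1) = T0 (k + int l)
    \<and> (\<exists>\<eta>0>0. \<eta>0 \<le> \<eta>1 \<and> (\<forall>\<eta>. 0 < \<eta> \<and> \<eta> < \<eta>0 \<longrightarrow>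
         (\<exists>\<eta>'. 0 < \<eta>' \<and> \<eta>' < \<eta>2 \<and>
            (mu k + hopf_delta f k * \<eta>) * (real l * T \<eta> + 1) = mu (k + int l) + hopf_delta f (k + int l) * \<eta>' \<and>
            T \<eta> / (real l * T \<eta> + 1) = S \<eta>' \<and>
            (\<exists>s. \<forall>t. p \<eta> ((real l * T \<eta> + 1) * t) = q \<eta>' (t + s)))))"
proof -
  obtain e where "e > 0" and unique: "\<And>m x S'. is_solution f m x \<Longrightarrow> min_period x S' \<Longrightarrow>
      \<bar>m - mu (k + int l)\<bar> < e \<Longrightarrow> (\<forall>t. \<bar>x t\<bar> < e) \<Longrightarrow> \<bar>S' - T0 (k + int l)\<bar> < e \<Longrightarrow>
      \<exists>\<eta>'. 0 < \<eta>' \<and> \<eta>' < \<eta>2 \<and> m = mu (k + int l) + hopf_delta f (k + int l) * \<eta>' \<and>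
        S' = S \<eta>' \<and> (\<exists>s. \<forall>t. x t = q \<eta>' (t + s))"
    using hopf_branch_locally_unique[OF assms(9)] by blast
  obtain \<eta>0 where "\<eta>0 > 0" and near: "\<And>\<eta>. 0 < \<eta> \<Longrightarrow> \<eta> < \<eta>0 \<Longrightarrow> \<eta> < \<eta>1
      \<and> \<bar>(mu k + hopf_delta f k * \<eta>) * (real l * T \<eta> + 1) - mu (k + int l)\<bar> < e
      \<and> \<bar>T \<eta> / (real l * T \<eta> + 1) - T0 (k + int l)\<bar> < e \<and> (\<forall>t. \<bar>p \<eta> t\<bar> < e)"
    using cooke_hopf_branch_eventually_near[OF assms(8,4) \<open>e > 0\<close>, of l]
    unfolding eventually_at_right[OF zero_less_one] by blast
  have "\<eta>1 > 0" using assms(8) unfolding hopf_branch_def by blast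
  have "\<exists>\<eta>'. 0 < \<eta>' \<and> \<eta>' < \<eta>2 \<and>
      (mu k + hopf_delta f k * \<eta>) * (real l * T \<eta> + 1) = mu (k + int l) + hopf_delta f (k + int l) * \<eta>' \<and>
      T \<eta> / (real l * T \<eta> + 1) = S \<eta>' \<and> (\<exists>s. \<forall>t. p \<eta> ((real l * T \<eta> + 1) * t) = q \<eta>' (t + s))"
    if "0 < \<eta>" "\<eta> < min \<eta>0 \<eta>1" for \<eta>
  proof -
    have "is_solution f (mu k + hopf_delta f k * \<eta>) (p \<eta>)" "min_period (p \<eta>) (T \<eta>)"
      using assms(8) that unfolding hopf_branch_def by auto
    from cooke_periodic_solution[OF this, of l] show ?thesis
      using unique near[of \<eta>] that by simp
  qed
  then show ?thesis
    using mu_cooke[OF assms(4)] T0_cooke[OF assms(4)] \<open>\<eta>0 > 0\<close> \<open>\<eta>1 > 0\<close>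
    by (intro conjI exI[of _ "min \<eta>0 \<eta>1"]) auto
qed

end
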